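(* Let $s,z\in\mathbb{N}$ with $\mu:=s+z\ge1$, let $\omega_1,\dots,\omega_s>0$, and let $p\in\mathbb{N}$. Then there exist a constant $c_\mu>0$ and continuous functions $c_i:\mathbb{R}_{>0}^{\mu-i}\to\mathbb{R}_{>0}$, $i\in\{1,\dots,\mu-1\}$, such that for all constants $a_1,\dots,a_\mu\in(0,1]$ and every trajectory $y(\cdot)$ of the closed-loop system $(\Sigma)$ with $u=\kappa(y)$ (both defined in the context, with these $a_i$), the control signal $U(t):=\kappa(y(t))$ satisfies, for all $k\in\{0,\dots,p\}$ and all $t\ge0$, $$|U^{(k)}(t)|\le a_\mu c_\mu+\sum_{i=1}^{\mu-1}a_i\,c_i(a_\mu,\dots,a_{i+1}).$$
   Context: Notation: $A_0=\begin{pmatrix}0&1\\-1&0\end{pmatrix}$, $b_0=\begin{pmatrix}0\\1\end{pmatrix}$; $\|\cdot\|$ is the Euclidean norm. Given $s,z\in\mathbb{N}$, $\mu=s+z\ge1$, $\omega_1,\dots,\omega_s>0$ and positive constants $a_1,\dots,a_\mu$, define for $1\le i\le\mu$: $\theta_{i,i+1}:=1$ and, for $i+2\le k\le\mu+1$, $\theta_{i,k}:=\prod_{h=i}^{k-2}\frac{1}{a_{h+1}}$; define $Q_{i,\mu}:=\prod_{l=i}^{\mu}a_l$. The system $(\Sigma)$ has state $y=(y_1,\dots,y_\mu)$ with $y_i\in\mathbb{R}^2$ for $i\le s$ and $y_i\in\mathbb{R}$ for $i>s$, input $u\in\mathbb{R}$, and reads $$\dot y_i=\omega_iA_0y_i+b_0\sum_{k=i+1}^{s}\theta_{i,k}b_0^Ty_k+b_0\sum_{k=s+1}^{\mu}\theta_{i,k}y_k+\theta_{i,\mu+1}b_0u,\quad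 i=1,\dots,s,$$ $$\dot y_i=\sum_{k=i+1}^{\mu}\theta_{i,k}y_k+\theta_{i,\mu+1}u,\quad i=s+1,\dots,\mu$$ (empty sums are zero). The feedback $\kappa$ is $$\kappa(y)=-\sum_{i=1}^{s}\frac{Q_{i,\mu}\,b_0^Ty_i}{\big(1+\sum_{m=i}^{\mu}\|y_m\|^2\big)^{1/2}}-\sum_{i=s+1}^{\mu}\frac{Q_{i,\mu}\,y_i}{\big(1+\sum_{m=i}^{\mu}\|y_m\|^2\big)^{1/2}}.$$ *)

theory Defs
  imports "HOL-Analysis.Analysis"
begin

text \<open>Components y_i for i = 1..s live in R^2, rendered as real \<times> real;
  components y_i for i = s+1..mu are real. A state is a pair (x, w) with
  x :: nat \<Rightarrow> real \<times> real (used at indices 1..s) and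
  w :: nat \<Rightarrow> real (used at indices s+1..mu).\<close>

definition A0 :: "real \<times> real \<Rightarrow> real \<times> real" where
  "A0 v = (snd v, - fst v)"

definition b0 :: "real \<times> real" where
  "b0 = (0, 1)"

definition b0T :: "real \<times> real \<Rightarrow> real" where
  "b0T v = b0 \<bullet> v"

definition theta :: "(nat \<Rightarrow> real) \<Rightarrow> nat \<Rightarrow> nat \<Rightarrow> real" where
  "theta a i k = (if k = i + 1 then 1 else (\<Prod>h\<in>{i..k-2}. 1 / a (h + 1)))"

definition Qc :: "(nat \<Rightarrow> real) \<Rightarrow> nat \<Rightarrow> nat \<Rightarrow> real" where
  "Qc a i mu = (\<Prod>l\<in>{i..mu}. a l)"

definition ynormsq :: "nat \<Rightarrow> (nat \<Rightarrow> real \<times> real) \<Rightarrow> (nat \<Rightarrow> real) \<Rightarrow> nat \<Rightarrow> real" where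
  "ynormsq s x w m = (if m \<le> s then (norm (x m))\<^sup>2 else (w m)\<^sup>2)"

definition kappa :: "nat \<Rightarrow> nat \<Rightarrow> (nat \<Rightarrow> real) \<Rightarrow> (nat \<Rightarrow> real \<times> real) \<Rightarrow> (nat \<Rightarrow> real) \<Rightarrow> real" where
  "kappa s z a x w =
     - (\<Sum>i=1..s. Qc a i (s+z) * b0T (x i) / sqrt (1 + (\<Sum>m=i..s+z. ynormsq s x w m)))
     - (\<Sum>i=s+1..s+z. Qc a i (s+z) * w i / sqrt (1 + (\<Sum>m=i..s+z. ynormsq s x w m)))"

definition rhs2 :: "nat \<Rightarrow> nat \<Rightarrow> (nat \<Rightarrow> real) \<Rightarrow> (nat \<Rightarrow> real) \<Rightarrow> (nat \<Rightarrow> real \<times> real) \<Rightarrow> (nat \<Rightarrow> real) \<Rightarrow> real \<Rightarrow> nat \<Rightarrow> real \<times> real" where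
  "rhs2 s z \<omega> a x w u i =
     \<omega> i *\<^sub>R A0 (x i)
     + (\<Sum>k=i+1..s. theta a i k * b0T (x k)) *\<^sub>R b0
     + (\<Sum>k=s+1..s+z. theta a i k * w k) *\<^sub>R b0
     + (theta a i (s+z+1) * u) *\<^sub>R b0"

definition rhs1 :: "nat \<Rightarrow> nat \<Rightarrow> (nat \<Rightarrow> real) \<Rightarrow> (nat \<Rightarrow> real) \<Rightarrow> real \<Rightarrow> nat \<Rightarrow> real" where
  "rhs1 s z a w u i =
     (\<Sum>k=i+1..s+z. theta a i k * w k) + theta a i (s+z+1) * u"

definition closed_loop_traj ::
  "nat \<Rightarrow> nat \<Rightarrow> (nat \<Rightarrow> real) \<Rightarrow> (nat \<Rightarrow> real) \<Rightarrow> (real \<Rightarrow> nat \<Rightarrow> real \<times> real) \<Rightarrow> (real \<Rightarrow> nat \<Rightarrow> real) \<Rightarrow> bool" where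
  "closed_loop_traj s z \<omega> a x w \<longleftrightarrow>
     (\<forall>t\<ge>0.
        (\<forall>i\<in>{1..s}. ((\<lambda>\<tau>. x \<tau> i) has_vector_derivative
            rhs2 s z \<omega> a (x t) (w t) (kappa s z a (x t) (w t)) i) (at t within {0..})) \<and>
        (\<forall>i\<in>{s+1..s+z}. ((\<lambda>\<tau>. w \<tau> i) has_real_derivative
            rhs1 s z a (w t) (kappa s z a (x t) (w t)) i) (at t within {0..})))"

text \<open>The domain (R_{>0})^{mu-i} of c_i, realised on the coordinates i+1..mu of a
  sequence (all other coordinates are 0), with the product topology.\<close>

definition posbox :: "nat \<Rightarrow> nat \<Rightarrow> (nat \<Rightarrow> real) set" where
  "posbox i mu = {v. (\<forall>j. i < j \<and> j \<le> mu \<longrightarrow> 0 < v j) \<and> (\<forall>j. \<not> (i < j \<and> j \<le> mu) \<longrightarrow> v j = 0)}"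

definition restr :: "nat \<Rightarrow> nat \<Rightarrow> (nat \<Rightarrow> real) \<Rightarrow> (nat \<Rightarrow> real)" where
  "restr i mu a = (\<lambda>j. if i < j \<and> j \<le> mu then a j else 0)"

end

theory Submission
  imports Defs
begin

text \<open>Along a closed-loop trajectory every derivative \<open>U\<^sup>(\<^sup>k\<^sup>)\<close> of \<open>U = \<kappa>(y)\<close> is a finite sum of
  summands \<open>c a\<^sup>e B\<^sub>1 \<cdots> B\<^sub>r\<close>, where \<open>a\<^sup>e\<close> is a Laurent monomial in \<open>a\<^sub>1, \<dots>, a\<^sub>\<mu>\<close> and each
  block \<open>B = R\<^sub>i\<^sup>n y\<^sub>m\<^sub>1 \<cdots> y\<^sub>m\<^sub>q\<close> with \<open>q \<le> n\<close>, \<open>m\<^sub>1, \<dots>, m\<^sub>q \<ge> i\<close> and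
  \<open>R\<^sub>i = (1 + \<Sum>\<^sub>m\<^sub>\<ge>\<^sub>i |y\<^sub>m|\<^sup>2)\<^sup>-\<^sup>1\<^sup>/\<^sup>2\<close> satisfies \<open>|B| \<le> 1\<close>. This class is closed under
  differentiation along \<open>(\<Sigma>)\<close> by the product rule, since \<open>y\<^sub>m'\<close> is linear in the \<open>y\<^sub>k\<close>, \<open>k \<ge> m\<close>,
  and in \<open>\<kappa>\<close>, and \<open>R\<^sub>i' = -R\<^sub>i\<^sup>3 \<Sum>\<^sub>m\<^sub>\<ge>\<^sub>i y\<^sub>m \<bullet> y\<^sub>m'\<close>.

  The key invariant: every exponent \<open>e\<close> has a leading index \<open>j\<close>, not larger than any block index,
  with \<open>e\<^sub>j \<ge> 1\<close> and \<open>e\<^sub>l \<ge> 0\<close> for \<open>l < j\<close>. Since \<open>a\<^sub>l \<le> 1\<close>, such a summand is bounded by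
  \<open>|c| a\<^sub>j \<Prod>\<^sub>l\<^sub>>\<^sub>j a\<^sub>l\<^sup>e\<^sup>\<^sub>l\<close>, and the last product is a continuous positive function of
  \<open>a\<^sub>j\<^sub>+\<^sub>1, \<dots>, a\<^sub>\<mu>\<close>. The invariant survives differentiation: the factors \<open>1/a\<^sub>l\<close> of
  \<open>\<theta>\<^sub>m\<^sub>,\<^sub>k\<close> only involve \<open>l > m\<close>, where \<open>m\<close> is at least the index of the differentiated block,
  while the feedback term contributes a new block of index \<open>j\<close> together with the factor
  \<open>a\<^sub>j \<cdots> a\<^sub>m\<close> when \<open>j \<le> m\<close>.\<close>

section \<open>Symbolic derivatives of the feedback\<close>

type_synonym expo = "nat \<Rightarrow> int"
type_synonym coord = "nat \<times> bool"
type_synonym block = "nat \<times> nat \<times> coord list"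
type_synonym summand = "real \<times> expo \<times> block list"
type_synonym csummand = "real \<times> expo \<times> coord list \<times> block list"

text \<open>A coordinate \<open>(m, c)\<close> is the second (\<open>c\<close>) or first (\<open>\<not> c\<close>) component of \<open>y\<^sub>m\<close> if
  \<open>m \<le> s\<close>, and the scalar \<open>y\<^sub>m\<close> if \<open>m > s\<close> (then \<open>c\<close> is irrelevant). A block \<open>(i, n, ys)\<close>
  stands for \<open>R\<^sub>i\<^sup>n \<Prod> ys\<close>, a summand \<open>(c, e, bs)\<close> for \<open>c a\<^sup>e \<Prod> bs\<close>; a \<open>csummand\<close> carries an
  extra list of loose coordinates.\<close>

definition ivl_expo :: "nat \<Rightarrow> nat \<Rightarrow> expo" where
  "ivl_expo j k = (\<lambda>l. if j \<le> l \<and> l \<le> k then 1 else 0)"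

definition apow :: "nat \<Rightarrow> (nat \<Rightarrow> real) \<Rightarrow> expo \<Rightarrow> real" where
  "apow mu a e = (\<Prod>l\<in>{1..mu}. a l powi e l)"

fun coord_val :: "nat \<Rightarrow> (nat \<Rightarrow> real \<times> real) \<Rightarrow> (nat \<Rightarrow> real) \<Rightarrow> coord \<Rightarrow> real" where
  "coord_val s x w (m, c) = (if m \<le> s then (if c then snd (x m) else fst (x m)) else w m)"

definition rnorm :: "nat \<Rightarrow> nat \<Rightarrow> (nat \<Rightarrow> real \<times> real) \<Rightarrow> (nat \<Rightarrow> real) \<Rightarrow> nat \<Rightarrow> real" where
  "rnorm s z x w i = 1 / sqrt (1 + (\<Sum>m=i..s+z. ynormsq s x w m))"

fun block_val :: "nat \<Rightarrow> nat \<Rightarrow> (nat \<Rightarrow> real \<times> real) \<Rightarrow> (nat \<Rightarrow> real) \<Rightarrow> block \<Rightarrow> real" where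
  "block_val s z x w (i, n, ys) = rnorm s z x w i ^ n * prod_list (map (coord_val s x w) ys)"

fun summand_val ::
  "nat \<Rightarrow> nat \<Rightarrow> (nat \<Rightarrow> real) \<Rightarrow> (nat \<Rightarrow> real \<times> real) \<Rightarrow> (nat \<Rightarrow> real) \<Rightarrow> summand \<Rightarrow> real" where
  "summand_val s z a x w (c, e, bs) = c * apow (s+z) a e * prod_list (map (block_val s z x w) bs)"

definition poly_val ::
  "nat \<Rightarrow> nat \<Rightarrow> (nat \<Rightarrow> real) \<Rightarrow> (nat \<Rightarrow> real \<times> real) \<Rightarrow> (nat \<Rightarrow> real) \<Rightarrow> summand list \<Rightarrow> real" where
  "poly_val s z a x w P = sum_list (map (summand_val s z a x w) P)"

fun csummand_val ::
  "nat \<Rightarrow> nat \<Rightarrow> (nat \<Rightarrow> real) \<Rightarrow> (nat \<Rightarrow> real \<times> real) \<Rightarrow> (nat \<Rightarrow> real) \<Rightarrow> csummand \<Rightarrow> real" where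
  "csummand_val s z a x w (c, e, ys, bs) =
     c * apow (s+z) a e * prod_list (map (coord_val s x w) ys) * prod_list (map (block_val s z x w) bs)"

definition cpoly_val ::
  "nat \<Rightarrow> nat \<Rightarrow> (nat \<Rightarrow> real) \<Rightarrow> (nat \<Rightarrow> real \<times> real) \<Rightarrow> (nat \<Rightarrow> real) \<Rightarrow> csummand list \<Rightarrow> real" where
  "cpoly_val s z a x w P = sum_list (map (csummand_val s z a x w) P)"

definition coord_comps :: "nat \<Rightarrow> nat \<Rightarrow> bool list" where
  "coord_comps s m = (if m \<le> s then [False, True] else [True])"

text \<open>The part \<open>\<Sum>\<^sub>k \<theta>\<^sub>m\<^sub>,\<^sub>k y\<^sub>k + \<theta>\<^sub>m\<^sub>,\<^sub>\<mu>\<^sub>+\<^sub>1 \<kappa>\<close> of \<open>y\<^sub>m'\<close>, using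
  \<open>\<theta>\<^sub>m\<^sub>,\<^sub>k = (a\<^sub>m\<^sub>+\<^sub>1 \<cdots> a\<^sub>k\<^sub>-\<^sub>1)\<^sup>-\<^sup>1\<close> and \<open>\<theta>\<^sub>m\<^sub>,\<^sub>\<mu>\<^sub>+\<^sub>1 Q\<^sub>j\<^sub>,\<^sub>\<mu> = a\<^sup>e\<close> with
  \<open>e = ivl_expo j \<mu> - ivl_expo (m+1) \<mu>\<close>.\<close>

definition coupling_terms :: "nat \<Rightarrow> nat \<Rightarrow> nat \<Rightarrow> csummand list" where
  "coupling_terms s z m =
     map (\<lambda>k. (1, \<lambda>l. - ivl_expo (m+1) (k-1) l, [(k, True)], [])) [m+1..<s+z+1]
     @ map (\<lambda>j. (-1, \<lambda>l. ivl_expo j (s+z) l - ivl_expo (m+1) (s+z) l, [], [(j, 1, [(j, True)])]))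
         [1..<s+z+1]"

fun coord_deriv :: "nat \<Rightarrow> nat \<Rightarrow> (nat \<Rightarrow> real) \<Rightarrow> coord \<Rightarrow> csummand list" where
  "coord_deriv s z \<omega> (m, c) =
     (if m \<le> s then [(if c then - \<omega> m else \<omega> m, \<lambda>_. 0, [(m, \<not> c)], [])] else [])
     @ (if m \<le> s \<and> \<not> c then [] else coupling_terms s z m)"

fun coords_deriv :: "nat \<Rightarrow> nat \<Rightarrow> (nat \<Rightarrow> real) \<Rightarrow> coord list \<Rightarrow> csummand list" where
  "coords_deriv s z \<omega> [] = []"
| "coords_deriv s z \<omega> (y # ys) =
     map (\<lambda>(c, e, ys1, bs). (c, e, ys1 @ ys, bs)) (coord_deriv s z \<omega> y)
     @ map (\<lambda>(c, e, ys', bs). (c, e, y # ys', bs)) (coords_deriv s z \<omega> ys)"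

text \<open>The first part comes from \<open>(R\<^sub>i\<^sup>n)' = -n R\<^sub>i\<^sup>n\<^sup>+\<^sup>2 \<Sum>\<^sub>m\<^sub>\<ge>\<^sub>i y\<^sub>m \<bullet> y\<^sub>m'\<close>.\<close>

fun block_deriv :: "nat \<Rightarrow> nat \<Rightarrow> (nat \<Rightarrow> real) \<Rightarrow> block \<Rightarrow> summand list" where
  "block_deriv s z \<omega> (i, n, ys) =
     concat (map (\<lambda>m. concat (map (\<lambda>c.
         map (\<lambda>(c', e, ys1, bs). (- real n * c', e, (i, n+2, (m, c) # ys1 @ ys) # bs))
           (coord_deriv s z \<omega> (m, c))) (coord_comps s m))) [i..<s+z+1])
     @ map (\<lambda>(c, e, ys', bs). (c, e, (i, n, ys') # bs)) (coords_deriv s z \<omega> ys)"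

fun blocks_deriv :: "nat \<Rightarrow> nat \<Rightarrow> (nat \<Rightarrow> real) \<Rightarrow> block list \<Rightarrow> summand list" where
  "blocks_deriv s z \<omega> [] = []"
| "blocks_deriv s z \<omega> (b # bs) =
     map (\<lambda>(c, e, bs'). (c, e, bs' @ bs)) (block_deriv s z \<omega> b)
     @ map (\<lambda>(c, e, bs'). (c, e, b # bs')) (blocks_deriv s z \<omega> bs)"

fun summand_deriv :: "nat \<Rightarrow> nat \<Rightarrow> (nat \<Rightarrow> real) \<Rightarrow> summand \<Rightarrow> summand list" where
  "summand_deriv s z \<omega> (c, e, bs) =
     map (\<lambda>(c', e', bs'). (c * c', \<lambda>l. e l + e' l, bs')) (blocks_deriv s z \<omega> bs)"

definition poly_deriv :: "nat \<Rightarrow> nat \<Rightarrow> (nat \<Rightarrow> real) \<Rightarrow> summand list \<Rightarrow> summand list" where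
  "poly_deriv s z \<omega> P = concat (map (summand_deriv s z \<omega>) P)"

definition kappa_poly :: "nat \<Rightarrow> nat \<Rightarrow> summand list" where
  "kappa_poly s z = map (\<lambda>j. (-1, ivl_expo j (s+z), [(j, 1, [(j, True)])])) [1..<s+z+1]"

definition kappa_deriv_poly :: "nat \<Rightarrow> nat \<Rightarrow> (nat \<Rightarrow> real) \<Rightarrow> nat \<Rightarrow> summand list" where
  "kappa_deriv_poly s z \<omega> k = (poly_deriv s z \<omega> ^^ k) (kappa_poly s z)"

fun bounded_block :: "nat \<Rightarrow> block \<Rightarrow> bool" where
  "bounded_block mu (i, n, ys) \<longleftrightarrow>
     1 \<le> i \<and> i \<le> mu \<and> length ys \<le> n \<and> (\<forall>y\<in>set ys. i \<le> fst y \<and> fst y \<le> mu)"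

section \<open>Evaluation along trajectories\<close>

lemma apow_add:
  assumes "\<forall>l\<in>{1..mu}. a l \<noteq> 0"
  shows "apow mu a (\<lambda>l. e l + e' l) = apow mu a e * apow mu a e'"
  unfolding apow_def prod.distrib[symmetric]
  by (rule prod.cong) (use assms in \<open>auto simp: power_int_add\<close>)

lemma apow_zero: "apow mu a (\<lambda>_. 0) = 1"
  by (simp add: apow_def)

lemma apow_pos: "\<forall>l\<in>{1..mu}. 0 < a l \<Longrightarrow> 0 < apow mu a e"
  unfolding apow_def by (intro prod_pos) auto

lemma apow_ivl_expo:
  assumes "1 \<le> j" "k \<le> mu"
  shows "apow mu a (ivl_expo j k) = (\<Prod>l\<in>{j..k}. a l)"
proof -
  have "apow mu a (ivl_expo j k) = (\<Prod>l\<in>{1..mu}. if l \<in> {j..k} then a l else 1)"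
    unfolding apow_def ivl_expo_def by (rule prod.cong) auto
  also have "\<dots> = (\<Prod>l\<in>{1..mu} \<inter> {j..k}. a l)"
    by (rule prod.inter_restrict[symmetric]) simp
  also have "{1..mu} \<inter> {j..k} = {j..k}" using assms by auto
  finally show ?thesis .
qed

lemma apow_neg_ivl_expo:
  assumes "1 \<le> j" "k \<le> mu"
  shows "apow mu a (\<lambda>l. - ivl_expo j k l) = (\<Prod>l\<in>{j..k}. 1 / a l)"
proof -
  have "apow mu a (\<lambda>l. - ivl_expo j k l) = (\<Prod>l\<in>{1..mu}. if l \<in> {j..k} then 1 / a l else 1)"
    unfolding apow_def ivl_expo_def
    by (rule prod.cong) (auto simp: power_int_minus divide_inverse)
  also have "\<dots> = (\<Prod>l\<in>{1..mu} \<inter> {j..k}. 1 / a l)"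
    by (rule prod.inter_restrict[symmetric]) simp
  also have "{1..mu} \<inter> {j..k} = {j..k}" using assms by auto
  finally show ?thesis .
qed

lemma theta_eq_apow:
  assumes "i + 1 \<le> k" "k \<le> mu + 1"
  shows "theta a i k = apow mu a (\<lambda>l. - ivl_expo (i+1) (k-1) l)"
proof (cases "k = i + 1")
  case True
  then show ?thesis unfolding theta_def apow_def ivl_expo_def by (simp add: prod.neutral)
next
  case False
  then have "theta a i k = (\<Prod>l\<in>{Suc i..Suc (k-2)}. 1 / a l)"
    by (simp add: theta_def prod.shift_bounds_cl_Suc_ivl del: prod.cl_ivl_Suc)
  also have "Suc (k-2) = k - 1" using False assms by auto
  finally show ?thesis using assms by (simp add: apow_neg_ivl_expo)
qed

lemma Qc_eq_apow: "1 \<le> i \<Longrightarrow> Qc a i mu = apow mu a (ivl_expo i mu)"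
  by (simp add: Qc_def apow_ivl_expo)

lemma poly_val_kappa_poly:
  "poly_val s z a x w (kappa_poly s z)
     = (\<Sum>j=1..s+z. - (apow (s+z) a (ivl_expo j (s+z)) * (rnorm s z x w j * coord_val s x w (j, True))))"
  unfolding poly_val_def kappa_poly_def map_map interv_sum_list_conv_sum_set_nat
  by (simp add: comp_def atLeastLessThanSuc_atLeastAtMost del: upt_Suc)

lemma kappa_eq_poly_val: "kappa s z a x w = poly_val s z a x w (kappa_poly s z)"
proof -
  let ?f = "\<lambda>j. - (apow (s+z) a (ivl_expo j (s+z)) * (rnorm s z x w j * coord_val s x w (j, True)))"
  have "{1..s+z} = {1..s} \<union> {s+1..s+z}" by auto
  then have "sum ?f {1..s+z} = sum ?f {1..s} + sum ?f {s+1..s+z}"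
    by (simp add: sum.union_disjoint)
  moreover have "sum ?f {1..s}
      = - (\<Sum>i=1..s. Qc a i (s+z) * b0T (x i) / sqrt (1 + (\<Sum>m=i..s+z. ynormsq s x w m)))"
    unfolding sum_negf[symmetric]
    by (rule sum.cong) (auto simp: Qc_eq_apow rnorm_def b0T_def b0_def inner_prod_def)
  moreover have "sum ?f {s+1..s+z}
      = - (\<Sum>i=s+1..s+z. Qc a i (s+z) * w i / sqrt (1 + (\<Sum>m=i..s+z. ynormsq s x w m)))"
    unfolding sum_negf[symmetric] by (rule sum.cong) (auto simp: Qc_eq_apow rnorm_def)
  ultimately show ?thesis by (simp add: kappa_def poly_val_kappa_poly)
qed

lemma sum_list_map_factor:
  fixes h :: "'a::semiring_0"
  assumes "\<And>u. f u = h * f' u"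
  shows "sum_list (map f L) = h * sum_list (map f' L)"
  using assms by (induction L) (simp_all add: distrib_left)

lemma sum_list_map_concat:
  "sum_list (map f (concat (map g L))) = sum_list (map (\<lambda>l. sum_list (map f (g l))) L)"
  by (induction L) auto

lemma cpoly_val_coupling_terms:
  assumes apos: "\<forall>i\<in>{1..s+z}. 0 < a i" and m: "m \<le> s+z"
  shows "cpoly_val s z a x w (coupling_terms s z m)
     = (\<Sum>k=m+1..s+z. theta a m k * coord_val s x w (k, True)) + theta a m (s+z+1) * kappa s z a x w"
proof -
  have nz: "\<forall>l\<in>{1..s+z}. a l \<noteq> 0" using apos by auto
  have "sum_list (map (csummand_val s z a x w)
          (map (\<lambda>k. (1, \<lambda>l. - ivl_expo (m+1) (k-1) l, [(k, True)], [])) [m+1..<s+z+1]))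
      = (\<Sum>k\<in>{m+1..<s+z+1}. apow (s+z) a (\<lambda>l. - ivl_expo (m+1) (k-1) l) * coord_val s x w (k, True))"
    by (simp add: interv_sum_list_conv_sum_set_nat comp_def del: upt_Suc)
  also have "\<dots> = (\<Sum>k=m+1..s+z. theta a m k * coord_val s x w (k, True))"
    by (rule sum.cong) (auto simp: theta_eq_apow[where mu="s+z"])
  finally have couple: "sum_list (map (csummand_val s z a x w)
          (map (\<lambda>k. (1, \<lambda>l. - ivl_expo (m+1) (k-1) l, [(k, True)], [])) [m+1..<s+z+1]))
      = (\<Sum>k=m+1..s+z. theta a m k * coord_val s x w (k, True))" .
  have "sum_list (map (csummand_val s z a x w)
          (map (\<lambda>j. (-1, \<lambda>l. ivl_expo j (s+z) l - ivl_expo (m+1) (s+z) l, [], [(j, 1, [(j, True)])]))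
             [1..<s+z+1]))
      = apow (s+z) a (\<lambda>l. - ivl_expo (m+1) (s+z) l) * poly_val s z a x w (kappa_poly s z)"
    unfolding poly_val_def kappa_poly_def map_map
    by (rule sum_list_map_factor) (simp add: apow_add[OF nz, symmetric] algebra_simps)
  also have "\<dots> = theta a m (s+z+1) * kappa s z a x w"
    using m by (simp add: theta_eq_apow[where mu="s+z"] kappa_eq_poly_val)
  finally show ?thesis
    unfolding cpoly_val_def coupling_terms_def map_append sum_list_append couple by simp
qed

lemma has_real_derivative_fst:
  "(f has_vector_derivative v) F \<Longrightarrow> ((\<lambda>\<tau>. fst (f \<tau>)) has_real_derivative fst v) F"
  using bounded_linear.has_vector_derivative[OF bounded_linear_fst]
  by (simp add: has_real_derivative_iff_has_vector_derivative)

lemma has_real_derivative_snd: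
  "(f has_vector_derivative v) F \<Longrightarrow> ((\<lambda>\<tau>. snd (f \<tau>)) has_real_derivative snd v) F"
  using bounded_linear.has_vector_derivative[OF bounded_linear_snd]
  by (simp add: has_real_derivative_iff_has_vector_derivative)

lemma cpoly_val_append: "cpoly_val s z a x w (L1 @ L2) = cpoly_val s z a x w L1 + cpoly_val s z a x w L2"
  by (simp add: cpoly_val_def)

lemma poly_val_append: "poly_val s z a x w (L1 @ L2) = poly_val s z a x w L1 + poly_val s z a x w L2"
  by (simp add: poly_val_def)

lemma poly_val_Cons: "poly_val s z a x w (T # P) = summand_val s z a x w T + poly_val s z a x w P"
  by (simp add: poly_val_def)

lemma poly_deriv_Cons: "poly_deriv s z \<omega> (T # P) = summand_deriv s z \<omega> T @ poly_deriv s z \<omega> P"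
  by (simp add: poly_deriv_def)

lemma cpoly_val_append_coords:
  "cpoly_val s z a x w (map (\<lambda>(c, e, ys1, bs). (c, e, ys1 @ ys, bs)) L)
     = cpoly_val s z a x w L * prod_list (map (coord_val s x w) ys)"
  by (induction L) (auto simp: cpoly_val_def algebra_simps)

lemma cpoly_val_cons_coord:
  "cpoly_val s z a x w (map (\<lambda>(c, e, ys, bs). (c, e, y # ys, bs)) L)
     = coord_val s x w y * cpoly_val s z a x w L"
  by (induction L) (auto simp: cpoly_val_def algebra_simps)

lemma poly_val_cons_block_coords:
  "poly_val s z a x w (map (\<lambda>(c, e, ys, bs). (c, e, (i, n, ys) # bs)) L)
     = rnorm s z x w i ^ n * cpoly_val s z a x w L"
  by (induction L) (auto simp: poly_val_def cpoly_val_def algebra_simps)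

lemma poly_val_rnorm_deriv_terms:
  "poly_val s z a x w (map (\<lambda>(c', e, ys1, bs). (- real n * c', e, (i, n+2, (m, c) # ys1 @ ys) # bs)) L)
     = - real n * rnorm s z x w i ^ (n+2) * prod_list (map (coord_val s x w) ys)
         * coord_val s x w (m, c) * cpoly_val s z a x w L"
  by (induction L) (auto simp: poly_val_def cpoly_val_def algebra_simps)

lemma poly_val_append_blocks:
  "poly_val s z a x w (map (\<lambda>(c, e, bs'). (c, e, bs' @ bs)) L)
     = poly_val s z a x w L * prod_list (map (block_val s z x w) bs)"
  by (induction L) (auto simp: poly_val_def algebra_simps)

lemma poly_val_cons_block:
  "poly_val s z a x w (map (\<lambda>(c, e, bs'). (c, e, b # bs')) L) = block_val s z x w b * poly_val s z a x w L"
  by (induction L) (auto simp: poly_val_def algebra_simps)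

lemma poly_val_scale:
  assumes "\<forall>l\<in>{1..s+z}. a l \<noteq> 0"
  shows "poly_val s z a x w (map (\<lambda>(c', e', bs'). (c * c', \<lambda>l. e l + e' l, bs')) L)
     = c * apow (s+z) a e * poly_val s z a x w L"
  by (induction L) (auto simp: poly_val_def algebra_simps apow_add[OF assms])

lemma ynormsq_eq_coord_comps:
  "ynormsq s x w m = (\<Sum>c\<in>set (coord_comps s m). (coord_val s x w (m, c))\<^sup>2)"
  by (cases "x m") (simp add: ynormsq_def coord_comps_def norm_Pair)

context
  fixes s z :: nat and \<omega> a :: "nat \<Rightarrow> real" and x :: "real \<Rightarrow> nat \<Rightarrow> real \<times> real"
    and w :: "real \<Rightarrow> nat \<Rightarrow> real" and t :: real
  assumes apos: "\<forall>i\<in>{1..s+z}. 0 < a i" and traj: "closed_loop_traj s z \<omega> a x w" and t: "t \<ge> 0"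
begin

lemma coord_val_has_derivative:
  assumes m: "1 \<le> m" "m \<le> s+z"
  shows "((\<lambda>\<tau>. coord_val s (x \<tau>) (w \<tau>) (m, c)) has_real_derivative
           cpoly_val s z a (x t) (w t) (coord_deriv s z \<omega> (m, c))) (at t within {0..})"
proof -
  let ?U = "kappa s z a (x t) (w t)"
  have coupling: "cpoly_val s z a (x t) (w t) (coupling_terms s z m)
      = (\<Sum>k=m+1..s+z. theta a m k * coord_val s (x t) (w t) (k, True)) + theta a m (s+z+1) * ?U"
    by (rule cpoly_val_coupling_terms[OF apos m(2)])
  show ?thesis
  proof (cases "m \<le> s")
    case True
    then have D: "((\<lambda>\<tau>. x \<tau> m) has_vector_derivative rhs2 s z \<omega> a (x t) (w t) ?U m) (at t within {0..})"
      using traj t m unfolding closed_loop_traj_def by auto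
    show ?thesis
    proof (cases c)
      case False
      then show ?thesis
        using has_real_derivative_fst[OF D] True
        by (simp add: rhs2_def A0_def b0_def cpoly_val_def apow_zero)
    next
      case c: True
      have "{m+1..s+z} = {m+1..s} \<union> {s+1..s+z}" using True by auto
      then have "(\<Sum>k=m+1..s+z. theta a m k * coord_val s (x t) (w t) (k, True))
          = (\<Sum>k=m+1..s. theta a m k * b0T (x t k)) + (\<Sum>k=s+1..s+z. theta a m k * w t k)"
        by (simp add: sum.union_disjoint b0T_def b0_def inner_prod_def)
      then have "snd (rhs2 s z \<omega> a (x t) (w t) ?U m) = cpoly_val s z a (x t) (w t) (coord_deriv s z \<omega> (m, c))"
        using True c coupling by (simp add: rhs2_def A0_def b0_def cpoly_val_def apow_zero)
      then show ?thesis
        using has_real_derivative_snd[OF D] True c by simp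
    qed
  next
    case False
    then have "((\<lambda>\<tau>. w \<tau> m) has_real_derivative rhs1 s z a (w t) ?U m) (at t within {0..})"
      using traj t m unfolding closed_loop_traj_def by auto
    moreover have "(\<Sum>k=m+1..s+z. theta a m k * coord_val s (x t) (w t) (k, True))
        = (\<Sum>k=m+1..s+z. theta a m k * w t k)"
      using False by (intro sum.cong) auto
    ultimately show ?thesis using False coupling by (simp add: rhs1_def)
  qed
qed

lemma rnorm_has_derivative:
  assumes i: "1 \<le> i"
  shows "((\<lambda>\<tau>. rnorm s z (x \<tau>) (w \<tau>) i) has_real_derivative
     - (rnorm s z (x t) (w t) i ^ 3) * (\<Sum>m\<in>{i..s+z}. \<Sum>c\<in>set (coord_comps s m).
         coord_val s (x t) (w t) (m, c) * cpoly_val s z a (x t) (w t) (coord_deriv s z \<omega> (m, c))))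
     (at t within {0..})"
    (is "(_ has_real_derivative - (_ ^ 3) * ?S') _")
proof -
  define S where "S \<tau> = (\<Sum>m\<in>{i..s+z}. \<Sum>c\<in>set (coord_comps s m). (coord_val s (x \<tau>) (w \<tau>) (m, c))\<^sup>2)"
    for \<tau>
  have rnorm_S: "rnorm s z (x \<tau>) (w \<tau>) i = inverse (sqrt (1 + S \<tau>))" for \<tau>
    by (simp add: rnorm_def S_def ynormsq_eq_coord_comps divide_inverse)
  have S0: "0 \<le> S t" unfolding S_def by (intro sum_nonneg) auto
  have "(S has_real_derivative (\<Sum>m\<in>{i..s+z}. \<Sum>c\<in>set (coord_comps s m).
      2 * (coord_val s (x t) (w t) (m, c) * cpoly_val s z a (x t) (w t) (coord_deriv s z \<omega> (m, c)))))
      (at t within {0..})"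
    unfolding S_def
  proof (intro DERIV_sum)
    fix m c assume "m \<in> {i..s+z}"
    then have "1 \<le> m" "m \<le> s+z" using i by auto
    from DERIV_power[OF coord_val_has_derivative[OF this, of c], of 2]
    show "((\<lambda>\<tau>. (coord_val s (x \<tau>) (w \<tau>) (m, c))\<^sup>2) has_real_derivative
        2 * (coord_val s (x t) (w t) (m, c) * cpoly_val s z a (x t) (w t) (coord_deriv s z \<omega> (m, c))))
        (at t within {0..})"
      by (simp add: mult_ac)
  qed
  then have "(S has_real_derivative 2 * ?S') (at t within {0..})"
    by (simp add: sum_distrib_left)
  then have sqrt_deriv: "((\<lambda>\<tau>. sqrt (1 + S \<tau>)) has_real_derivative inverse (sqrt (1 + S t)) / 2 * (2 * ?S'))
      (at t within {0..})"
    using S0 DERIV_add[OF DERIV_const] by (intro DERIV_chain2[where f = sqrt] DERIV_real_sqrt) auto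
  have inv_cube: "inverse r / 2 * (2 * q) * inverse (r ^ Suc (Suc 0)) = inverse r ^ 3 * q"
    for r q :: real
    by (simp add: power3_eq_cube inverse_mult_distrib)
  have "sqrt (1 + S t) \<noteq> 0" using S0 by simp
  from DERIV_inverse_fun[OF sqrt_deriv this]
  have "((\<lambda>\<tau>. inverse (sqrt (1 + S \<tau>))) has_real_derivative - (inverse (sqrt (1 + S t)) ^ 3 * ?S'))
      (at t within {0..})"
    unfolding inv_cube .
  then show ?thesis unfolding rnorm_S by simp
qed

lemma coords_val_has_derivative:
  "\<forall>y\<in>set ys. 1 \<le> fst y \<and> fst y \<le> s+z \<Longrightarrow>
   ((\<lambda>\<tau>. prod_list (map (coord_val s (x \<tau>) (w \<tau>)) ys)) has_real_derivative
      cpoly_val s z a (x t) (w t) (coords_deriv s z \<omega> ys)) (at t within {0..})"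
proof (induction ys)
  case Nil
  then show ?case by (simp add: cpoly_val_def)
next
  case (Cons y ys)
  obtain m c where y: "y = (m, c)" by (cases y)
  have "((\<lambda>\<tau>. coord_val s (x \<tau>) (w \<tau>) y) has_real_derivative
      cpoly_val s z a (x t) (w t) (coord_deriv s z \<omega> y)) (at t within {0..})"
    using coord_val_has_derivative Cons.prems y by auto
  from DERIV_mult[OF this Cons.IH] Cons.prems show ?case
    unfolding coords_deriv.simps cpoly_val_append cpoly_val_append_coords cpoly_val_cons_coord
    by (simp add: mult_ac del: coord_deriv.simps)
qed

lemma block_val_has_derivative:
  assumes "bounded_block (s+z) b"
  shows "((\<lambda>\<tau>. block_val s z (x \<tau>) (w \<tau>) b) has_real_derivative
      poly_val s z a (x t) (w t) (block_deriv s z \<omega> b)) (at t within {0..})"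
proof -
  obtain i n ys where b: "b = (i, n, ys)" by (cases b)
  have i: "1 \<le> i" and ys: "\<forall>y\<in>set ys. 1 \<le> fst y \<and> fst y \<le> s+z" using assms b by auto
  define R where "R = rnorm s z (x t) (w t) i"
  define P where "P = prod_list (map (coord_val s (x t) (w t)) ys)"
  define S where "S = (\<Sum>m\<in>{i..s+z}. \<Sum>c\<in>set (coord_comps s m).
      coord_val s (x t) (w t) (m, c) * cpoly_val s z a (x t) (w t) (coord_deriv s z \<omega> (m, c)))"
  have rnorm_part: "poly_val s z a (x t) (w t) (concat (map (\<lambda>m. concat (map (\<lambda>c.
         map (\<lambda>(c', e, ys1, bs). (- real n * c', e, (i, n+2, (m, c) # ys1 @ ys) # bs))
           (coord_deriv s z \<omega> (m, c))) (coord_comps s m))) [i..<s+z+1]))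
      = - real n * R ^ (n+2) * P * S"
    unfolding poly_val_def sum_list_map_concat poly_val_rnorm_deriv_terms[unfolded poly_val_def]
      interv_sum_list_conv_sum_set_nat R_def P_def S_def
    by (simp add: sum_list_distinct_conv_sum_set coord_comps_def sum_distrib_left
        atLeastLessThanSuc_atLeastAtMost mult_ac del: upt_Suc coord_deriv.simps)
  have pow: "real n * (R ^ 3 * R ^ (n - 1)) = real n * R ^ (n+2)"
  proof (cases n)
    case (Suc k)
    then have "n + 2 = 3 + (n - 1)" by simp
    then show ?thesis by (simp only: power_add)
  qed simp
  have "real n * (- (R ^ 3) * S * R ^ (n - 1)) * P = - (real n * (R ^ 3 * R ^ (n - 1))) * P * S"
    by (simp add: algebra_simps)
  also have "\<dots> = - real n * R ^ (n+2) * P * S" unfolding pow by simp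
  finally have "real n * (- (R ^ 3) * S * R ^ (n - 1)) * P
      + cpoly_val s z a (x t) (w t) (coords_deriv s z \<omega> ys) * R ^ n
      = poly_val s z a (x t) (w t) (block_deriv s z \<omega> b)"
    unfolding b block_deriv.simps poly_val_append rnorm_part poly_val_cons_block_coords R_def
    by (simp add: mult_ac)
  with DERIV_mult[OF DERIV_power[OF rnorm_has_derivative[OF i], of n] coords_val_has_derivative[OF ys]]
  show ?thesis unfolding b R_def P_def S_def by simp
qed

lemma blocks_val_has_derivative:
  "\<forall>b\<in>set bs. bounded_block (s+z) b \<Longrightarrow>
   ((\<lambda>\<tau>. prod_list (map (block_val s z (x \<tau>) (w \<tau>)) bs)) has_real_derivative
      poly_val s z a (x t) (w t) (blocks_deriv s z \<omega> bs)) (at t within {0..})"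
proof (induction bs)
  case Nil
  then show ?case by (simp add: poly_val_def)
next
  case (Cons b bs)
  have "bounded_block (s+z) b" "\<forall>b\<in>set bs. bounded_block (s+z) b" using Cons.prems by auto
  from DERIV_mult[OF block_val_has_derivative[OF this(1)] Cons.IH[OF this(2)]] show ?case
    unfolding blocks_deriv.simps poly_val_append poly_val_append_blocks poly_val_cons_block
    by (simp only: prod_list.Cons list.map mult.commute)
qed

lemma summand_val_has_derivative:
  assumes "\<forall>b\<in>set (snd (snd T)). bounded_block (s+z) b"
  shows "((\<lambda>\<tau>. summand_val s z a (x \<tau>) (w \<tau>) T) has_real_derivative
      poly_val s z a (x t) (w t) (summand_deriv s z \<omega> T)) (at t within {0..})"
proof -
  obtain c e bs where T: "T = (c, e, bs)" by (cases T)
  have "\<forall>l\<in>{1..s+z}. a l \<noteq> 0" using apos by auto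
  moreover have "\<forall>b\<in>set bs. bounded_block (s+z) b" using assms T by simp
  ultimately show ?thesis
    using DERIV_cmult[OF blocks_val_has_derivative, of bs "c * apow (s+z) a e"]
    unfolding T summand_val.simps summand_deriv.simps by (simp add: poly_val_scale mult.assoc)
qed

lemma poly_val_has_derivative:
  "\<forall>T\<in>set P. \<forall>b\<in>set (snd (snd T)). bounded_block (s+z) b \<Longrightarrow>
   ((\<lambda>\<tau>. poly_val s z a (x \<tau>) (w \<tau>) P) has_real_derivative
      poly_val s z a (x t) (w t) (poly_deriv s z \<omega> P)) (at t within {0..})"
proof (induction P)
  case Nil
  then show ?case by (simp add: poly_val_def poly_deriv_def)
next
  case (Cons T P)
  have "\<forall>b\<in>set (snd (snd T)). bounded_block (s+z) b" "\<forall>T\<in>set P. \<forall>b\<in>set (snd (snd T)). bounded_block (s+z) b"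
    using Cons.prems by auto
  from DERIV_add[OF summand_val_has_derivative[OF this(1)] Cons.IH[OF this(2)]] show ?case
    unfolding poly_deriv_Cons poly_val_Cons poly_val_append .
qed

end

section \<open>The exponent invariant\<close>

definition leading_exponent :: "nat \<Rightarrow> expo \<Rightarrow> nat set \<Rightarrow> bool" where
  "leading_exponent mu e Is \<longleftrightarrow> (\<exists>j. 1 \<le> j \<and> j \<le> mu \<and> 1 \<le> e j \<and>
     (\<forall>l. 1 \<le> l \<and> l < j \<longrightarrow> 0 \<le> e l) \<and> (\<forall>i\<in>Is. j \<le> i))"

text \<open>How differentiating a block with index \<open>i\<close> may change the exponent (by \<open>\<delta>\<close>) and the
  block indices (from \<open>Os\<close> to \<open>Ns\<close>): \<open>\<delta>\<close> is nonnegative up to some \<open>m \<ge> i\<close>, and at most one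
  new index \<open>j'\<close> appears, which is either above \<open>m\<close> or brings a factor \<open>a\<^sub>j\<^sub>'\<close> and no
  \<open>a\<^sub>l\<close> with \<open>l < j'\<close>.\<close>

definition admissible_increment :: "nat \<Rightarrow> nat \<Rightarrow> expo \<Rightarrow> nat set \<Rightarrow> nat set \<Rightarrow> bool" where
  "admissible_increment mu i \<delta> Ns Os \<longleftrightarrow> (\<exists>m\<ge>i. (\<forall>l\<le>m. 0 \<le> \<delta> l) \<and>
     (Ns \<subseteq> Os \<or> (\<exists>j'. 1 \<le> j' \<and> j' \<le> mu \<and> Ns \<subseteq> insert j' Os \<and>
        (j' \<le> m \<longrightarrow> 1 \<le> \<delta> j' \<and> (\<forall>l<j'. \<delta> l = 0)))))"

fun good_summand :: "nat \<Rightarrow> summand \<Rightarrow> bool" where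
  "good_summand mu (c, e, bs) \<longleftrightarrow>
     (\<forall>b\<in>set bs. bounded_block mu b) \<and> leading_exponent mu e (fst ` set bs)"

lemma admissible_increment_mono:
  assumes "admissible_increment mu i \<delta> Ns Os" "i' \<le> i" "Ns' \<subseteq> Ns \<union> Os'" "Os \<subseteq> Os'"
  shows "admissible_increment mu i' \<delta> Ns' Os'"
proof -
  obtain m where "m \<ge> i" "\<forall>l\<le>m. 0 \<le> \<delta> l"
    and "Ns \<subseteq> Os \<or> (\<exists>j'. 1 \<le> j' \<and> j' \<le> mu \<and> Ns \<subseteq> insert j' Os \<and>
           (j' \<le> m \<longrightarrow> 1 \<le> \<delta> j' \<and> (\<forall>l<j'. \<delta> l = 0)))"
    using assms(1) unfolding admissible_increment_def by blast
  moreover have "Ns' \<subseteq> Os'" if "Ns \<subseteq> Os" using that assms(3,4) by blast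
  moreover have "Ns' \<subseteq> insert j' Os'" if "Ns \<subseteq> insert j' Os" for j' using that assms(3,4) by blast
  ultimately show ?thesis
    unfolding admissible_increment_def using assms(2) by (intro exI[of _ m]) (metis le_trans)
qed

lemma leading_exponent_add:
  assumes L: "leading_exponent mu e Os" and i: "i \<in> Os"
    and D: "admissible_increment mu i \<delta> Ns Os"
  shows "leading_exponent mu (\<lambda>l. e l + \<delta> l) Ns"
proof -
  obtain j where j: "1 \<le> j" "j \<le> mu" "1 \<le> e j" "\<forall>l. 1 \<le> l \<and> l < j \<longrightarrow> 0 \<le> e l" "\<forall>i\<in>Os. j \<le> i"
    using L unfolding leading_exponent_def by blast
  obtain m where m: "m \<ge> i" "\<forall>l\<le>m. 0 \<le> \<delta> l"
    and N: "Ns \<subseteq> Os \<or> (\<exists>j'. 1 \<le> j' \<and> j' \<le> mu \<and> Ns \<subseteq> insert j' Os \<and>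
              (j' \<le> m \<longrightarrow> 1 \<le> \<delta> j' \<and> (\<forall>l<j'. \<delta> l = 0)))"
    using D unfolding admissible_increment_def by blast
  have jm: "j \<le> m" using j(5) i m(1) by fastforce
  show ?thesis
  proof (cases "\<forall>n\<in>Ns. j \<le> n")
    case True
    have "1 \<le> e j + \<delta> j" using j(3) m(2) jm by (smt (verit))
    moreover have "\<forall>l. 1 \<le> l \<and> l < j \<longrightarrow> 0 \<le> e l + \<delta> l" using j(4) m(2) jm by fastforce
    ultimately show ?thesis unfolding leading_exponent_def using j(1,2) True by blast
  next
    case False
    then obtain j' where j': "1 \<le> j'" "j' \<le> mu" "Ns \<subseteq> insert j' Os" "j' < j"
      "j' \<le> m \<longrightarrow> 1 \<le> \<delta> j' \<and> (\<forall>l<j'. \<delta> l = 0)"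
      using N j(5) by (metis in_mono insertE not_le_imp_less)
    then have "1 \<le> \<delta> j'" "\<forall>l<j'. \<delta> l = 0" using jm by auto
    moreover have "0 \<le> e l" if "1 \<le> l" "l \<le> j'" for l using j(4) j'(4) that by auto
    moreover have "\<forall>n\<in>Ns. j' \<le> n" using j(5) j'(3,4) by fastforce
    ultimately show ?thesis
      unfolding leading_exponent_def using j'(1,2) by (intro exI[of _ j']) force
  qed
qed

lemma coord_deriv_cases:
  assumes "(c', \<delta>, ys1, bs) \<in> set (coord_deriv s z \<omega> (m, c))"
  shows "(\<delta> = (\<lambda>_. 0) \<and> bs = [] \<and> (\<exists>c0. ys1 = [(m, c0)])) \<or>
         (\<exists>k\<in>{m+1..s+z}. \<delta> = (\<lambda>l. - ivl_expo (m+1) (k-1) l) \<and> ys1 = [(k, True)] \<and> bs = []) \<or>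
         (\<exists>j\<in>{1..s+z}. \<delta> = (\<lambda>l. ivl_expo j (s+z) l - ivl_expo (m+1) (s+z) l) \<and> ys1 = [] \<and>
            bs = [(j, 1, [(j, True)])])"
  using assms by (auto simp: coupling_terms_def split: if_splits)

lemma coord_deriv_admissible:
  assumes m: "1 \<le> m" "m \<le> s+z" and mem: "(c', \<delta>, ys1, bs) \<in> set (coord_deriv s z \<omega> (m, c))"
  shows "length ys1 \<le> 1 \<and> (\<forall>y\<in>set ys1. m \<le> fst y \<and> fst y \<le> s+z) \<and>
     (\<forall>b\<in>set bs. bounded_block (s+z) b) \<and> admissible_increment (s+z) m \<delta> (fst ` set bs) {}"
  using coord_deriv_cases[OF mem]
proof (elim disjE exE conjE bexE)
  fix c0 assume "\<delta> = (\<lambda>_. 0)" "bs = []" "ys1 = [(m, c0)]"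
  then show ?thesis using m unfolding admissible_increment_def by auto
next
  fix k assume "k \<in> {m+1..s+z}" "\<delta> = (\<lambda>l. - ivl_expo (m+1) (k-1) l)" "ys1 = [(k, True)]" "bs = []"
  then show ?thesis using m unfolding admissible_increment_def by (auto simp: ivl_expo_def)
next
  fix j assume j: "j \<in> {1..s+z}" "\<delta> = (\<lambda>l. ivl_expo j (s+z) l - ivl_expo (m+1) (s+z) l)" "ys1 = []"
    "bs = [(j, 1, [(j, True)])]"
  have "admissible_increment (s+z) m \<delta> (fst ` set bs) {}"
    unfolding admissible_increment_def using j
    by (intro exI[of _ m] conjI disjI2 exI[of _ j]) (auto simp: ivl_expo_def)
  then show ?thesis using j by auto
qed

lemma coords_deriv_admissible:
  assumes "\<forall>y\<in>set ys. i \<le> fst y \<and> fst y \<le> s+z" "1 \<le> i" "(c, \<delta>, ys', bs) \<in> set (coords_deriv s z \<omega> ys)"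
  shows "length ys' \<le> length ys \<and> (\<forall>y\<in>set ys'. i \<le> fst y \<and> fst y \<le> s+z) \<and>
     (\<forall>b\<in>set bs. bounded_block (s+z) b) \<and> admissible_increment (s+z) i \<delta> (fst ` set bs) {}"
  using assms
proof (induction ys arbitrary: c \<delta> ys' bs)
  case Nil
  then show ?case by simp
next
  case (Cons y ys)
  obtain m c0 where y: "y = (m, c0)" by (cases y)
  from Cons.prems(3) consider
    (head) ys1 where "(c, \<delta>, ys1, bs) \<in> set (coord_deriv s z \<omega> y)" "ys' = ys1 @ ys"
  | (tail) ys'' where "(c, \<delta>, ys'', bs) \<in> set (coords_deriv s z \<omega> ys)" "ys' = y # ys''"
    by (auto simp del: coord_deriv.simps)
  then show ?case
  proof cases
    case (head ys1)
    have m: "i \<le> m" "m \<le> s+z" using Cons.prems(1) y by auto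
    with Cons.prems(2) coord_deriv_admissible[of m s z c \<delta> ys1 bs \<omega> c0] head(1) y
    have "length ys1 \<le> 1 \<and> (\<forall>y\<in>set ys1. m \<le> fst y \<and> fst y \<le> s+z) \<and>
        (\<forall>b\<in>set bs. bounded_block (s+z) b) \<and> admissible_increment (s+z) m \<delta> (fst ` set bs) {}"
      by auto
    moreover from this m have "admissible_increment (s+z) i \<delta> (fst ` set bs) {}"
      by (auto elim: admissible_increment_mono)
    ultimately show ?thesis using head(2) Cons.prems(1) m by fastforce
  next
    case (tail ys'')
    then show ?thesis using Cons.IH[OF _ Cons.prems(2) tail(1)] Cons.prems(1) by auto
  qed
qed

lemma block_deriv_admissible:
  assumes B: "bounded_block (s+z) (i, n, ys)" and mem: "(c, \<delta>, bs') \<in> set (block_deriv s z \<omega> (i, n, ys))"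
  shows "(\<forall>b\<in>set bs'. bounded_block (s+z) b) \<and> admissible_increment (s+z) i \<delta> (fst ` set bs') {i}"
proof -
  have i: "1 \<le> i" "i \<le> s+z" "length ys \<le> n" "\<forall>y\<in>set ys. i \<le> fst y \<and> fst y \<le> s+z" using B by auto
  from mem consider
    (rnorm) m c0 c' ys1 bs where "m \<in> {i..s+z}" "(c', \<delta>, ys1, bs) \<in> set (coord_deriv s z \<omega> (m, c0))"
      "bs' = (i, n+2, (m, c0) # ys1 @ ys) # bs"
  | (coords) ys' bs where "(c, \<delta>, ys', bs) \<in> set (coords_deriv s z \<omega> ys)" "bs' = (i, n, ys') # bs"
    by (auto simp del: upt_Suc coord_deriv.simps)
  then show ?thesis
  proof cases
    case (rnorm m c0 c' ys1 bs)
    then have "1 \<le> m" "m \<le> s+z" using i by auto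
    from coord_deriv_admissible[OF this rnorm(2)]
    have P: "length ys1 \<le> 1 \<and> (\<forall>y\<in>set ys1. m \<le> fst y \<and> fst y \<le> s+z) \<and>
        (\<forall>b\<in>set bs. bounded_block (s+z) b) \<and> admissible_increment (s+z) m \<delta> (fst ` set bs) {}" .
    then have "admissible_increment (s+z) i \<delta> (fst ` set bs') {i}"
      using rnorm(1,3) by (auto elim!: admissible_increment_mono)
    moreover have "bounded_block (s+z) (i, n+2, (m, c0) # ys1 @ ys)" using P i rnorm(1) by fastforce
    ultimately show ?thesis using P rnorm(3) by auto
  next
    case (coords ys' bs)
    from coords_deriv_admissible[OF i(4) i(1) coords(1)]
    have P: "length ys' \<le> length ys \<and> (\<forall>y\<in>set ys'. i \<le> fst y \<and> fst y \<le> s+z) \<and>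
        (\<forall>b\<in>set bs. bounded_block (s+z) b) \<and> admissible_increment (s+z) i \<delta> (fst ` set bs) {}" .
    then have "admissible_increment (s+z) i \<delta> (fst ` set bs') {i}"
      using coords(2) by (auto elim!: admissible_increment_mono)
    then show ?thesis using P i coords(2) by auto
  qed
qed

lemma blocks_deriv_admissible:
  assumes "\<forall>b\<in>set bs. bounded_block (s+z) b" "(c, \<delta>, bs') \<in> set (blocks_deriv s z \<omega> bs)"
  shows "(\<forall>b\<in>set bs'. bounded_block (s+z) b) \<and>
     (\<exists>i\<in>fst ` set bs. admissible_increment (s+z) i \<delta> (fst ` set bs') (fst ` set bs))"
  using assms
proof (induction bs arbitrary: c \<delta> bs')
  case Nil
  then show ?case by simp
next
  case (Cons b bs)
  obtain i n ys where b: "b = (i, n, ys)" by (cases b)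
  from Cons.prems(2) consider
    (head) bs'' where "(c, \<delta>, bs'') \<in> set (block_deriv s z \<omega> b)" "bs' = bs'' @ bs"
  | (tail) bs'' where "(c, \<delta>, bs'') \<in> set (blocks_deriv s z \<omega> bs)" "bs' = b # bs''"
    by (auto simp del: block_deriv.simps)
  then show ?case
  proof cases
    case (head bs'')
    have "bounded_block (s+z) (i, n, ys)" using Cons.prems(1) b by auto
    from block_deriv_admissible[OF this head(1)[unfolded b]]
    have P: "(\<forall>b\<in>set bs''. bounded_block (s+z) b) \<and> admissible_increment (s+z) i \<delta> (fst ` set bs'') {i}" .
    then have "admissible_increment (s+z) i \<delta> (fst ` set bs') (fst ` set (b # bs))"
      using head(2) b by (auto elim!: admissible_increment_mono)
    then show ?thesis using P head(2) Cons.prems(1) b by auto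
  next
    case (tail bs'')
    from Cons.IH[OF _ tail(1)] Cons.prems(1) obtain i' where
      P: "\<forall>b\<in>set bs''. bounded_block (s+z) b" "i' \<in> fst ` set bs"
        "admissible_increment (s+z) i' \<delta> (fst ` set bs'') (fst ` set bs)"
      by auto
    have "admissible_increment (s+z) i' \<delta> (fst ` set bs') (fst ` set (b # bs))"
      using P(3) tail(2) by (auto elim!: admissible_increment_mono)
    then show ?thesis using P tail(2) Cons.prems(1) by auto
  qed
qed

lemma summand_deriv_good:
  assumes "good_summand (s+z) T" "T' \<in> set (summand_deriv s z \<omega> T)"
  shows "good_summand (s+z) T'"
proof -
  obtain c e bs where T: "T = (c, e, bs)" by (cases T)
  from assms(2) T obtain c' e' bs' where m: "(c', e', bs') \<in> set (blocks_deriv s z \<omega> bs)"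
    and T': "T' = (c * c', \<lambda>l. e l + e' l, bs')"
    by auto
  have I: "\<forall>b\<in>set bs. bounded_block (s+z) b" "leading_exponent (s+z) e (fst ` set bs)"
    using assms(1) T by auto
  from blocks_deriv_admissible[OF I(1) m] obtain i where
    P: "\<forall>b\<in>set bs'. bounded_block (s+z) b" "i \<in> fst ` set bs"
      "admissible_increment (s+z) i e' (fst ` set bs') (fst ` set bs)"
    by blast
  then show ?thesis using leading_exponent_add[OF I(2) P(2,3)] T' by simp
qed

lemma kappa_deriv_poly_good: "T \<in> set (kappa_deriv_poly s z \<omega> k) \<Longrightarrow> good_summand (s+z) T"
proof (induction k arbitrary: T)
  case 0
  then obtain j where j: "j \<in> {1..s+z}" "T = (-1, ivl_expo j (s+z), [(j, 1, [(j, True)])])"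
    unfolding kappa_deriv_poly_def kappa_poly_def by auto
  have "leading_exponent (s+z) (ivl_expo j (s+z)) {j}"
    unfolding leading_exponent_def using j(1) by (intro exI[of _ j]) (auto simp: ivl_expo_def)
  then show ?case using j by simp
next
  case (Suc k)
  then obtain T0 where "T0 \<in> set (kappa_deriv_poly s z \<omega> k)" "T \<in> set (summand_deriv s z \<omega> T0)"
    unfolding kappa_deriv_poly_def poly_deriv_def by (auto simp del: summand_deriv.simps)
  then show ?case using Suc.IH summand_deriv_good by blast
qed

section \<open>Bounds\<close>

lemma rnorm_pos: "0 < rnorm s z x w i" and rnorm_le_1: "rnorm s z x w i \<le> 1"
proof -
  have "0 \<le> (\<Sum>m=i..s+z. ynormsq s x w m)" by (intro sum_nonneg) (auto simp: ynormsq_def)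
  then show "0 < rnorm s z x w i" "rnorm s z x w i \<le> 1" by (auto simp: rnorm_def)
qed

lemma abs_coord_val_mult_rnorm_le_1:
  assumes "i \<le> m" "m \<le> s+z"
  shows "\<bar>coord_val s x w (m, c)\<bar> * rnorm s z x w i \<le> 1"
proof -
  let ?S = "\<Sum>m=i..s+z. ynormsq s x w m"
  have "(coord_val s x w (m, c))\<^sup>2 \<le> ynormsq s x w m"
    by (cases "x m") (auto simp: ynormsq_def norm_Pair)
  also have "\<dots> \<le> ?S"
    using assms by (intro member_le_sum) (auto simp: ynormsq_def)
  finally have "\<bar>coord_val s x w (m, c)\<bar> \<le> sqrt (1 + ?S)"
    by (intro real_le_rsqrt) simp
  moreover have "0 \<le> ?S" by (intro sum_nonneg) (auto simp: ynormsq_def)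
  ultimately show ?thesis unfolding rnorm_def by (simp add: divide_simps)
qed

lemma abs_prod_coord_val_mult_rnorm_le_1:
  "\<forall>y\<in>set ys. i \<le> fst y \<and> fst y \<le> s+z \<Longrightarrow>
   \<bar>prod_list (map (coord_val s x w) ys)\<bar> * rnorm s z x w i ^ length ys \<le> 1"
proof (induction ys)
  case Nil
  then show ?case by simp
next
  case (Cons y ys)
  obtain m c where y: "y = (m, c)" by (cases y)
  have "\<bar>coord_val s x w (m, c)\<bar> * rnorm s z x w i \<le> 1"
    using Cons.prems y abs_coord_val_mult_rnorm_le_1 by auto
  moreover have "0 \<le> \<bar>prod_list (map (coord_val s x w) ys)\<bar> * rnorm s z x w i ^ length ys"
    using rnorm_pos[of s z x w i] by simp
  moreover have "\<bar>prod_list (map (coord_val s x w) ys)\<bar> * rnorm s z x w i ^ length ys \<le> 1"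
    using Cons by auto
  ultimately have "(\<bar>coord_val s x w (m, c)\<bar> * rnorm s z x w i)
      * (\<bar>prod_list (map (coord_val s x w) ys)\<bar> * rnorm s z x w i ^ length ys) \<le> 1"
    by (rule mult_le_one)
  then show ?case using y by (simp add: abs_mult mult_ac)
qed

lemma abs_block_val_le_1: "bounded_block (s+z) b \<Longrightarrow> \<bar>block_val s z x w b\<bar> \<le> 1"
proof -
  assume B: "bounded_block (s+z) b"
  obtain i n ys where b: "b = (i, n, ys)" by (cases b)
  let ?R = "rnorm s z x w i"
  let ?P = "prod_list (map (coord_val s x w) ys)"
  have "?R ^ n \<le> ?R ^ length ys"
    using B b rnorm_pos[of s z x w i] rnorm_le_1[of s z x w i] by (intro power_decreasing) auto
  then have "\<bar>?P\<bar> * ?R ^ n \<le> \<bar>?P\<bar> * ?R ^ length ys" by (simp add: mult_left_mono)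
  also have "\<dots> \<le> 1" using B b by (intro abs_prod_coord_val_mult_rnorm_le_1) auto
  finally show ?thesis using b rnorm_pos[of s z x w i] by (simp add: abs_mult mult.commute)
qed

lemma abs_prod_block_val_le_1:
  "\<forall>b\<in>set bs. bounded_block (s+z) b \<Longrightarrow> \<bar>prod_list (map (block_val s z x w) bs)\<bar> \<le> 1"
  by (induction bs) (auto simp: abs_mult intro!: mult_le_one abs_block_val_le_1)

text \<open>The factors above \<open>j\<close> are kept since their exponents may be negative.\<close>

lemma apow_le_leading:
  assumes a: "\<forall>l\<in>{1..mu}. 0 < a l \<and> a l \<le> 1" and j: "1 \<le> j" "j \<le> mu" "1 \<le> e j"
    and below: "\<forall>l. 1 \<le> l \<and> l < j \<longrightarrow> 0 \<le> e l"
  shows "apow mu a e \<le> a j * (\<Prod>l\<in>{j+1..mu}. a l powi e l)"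
proof -
  have U: "{1..mu} = {1..<j} \<union> ({j} \<union> {j+1..mu})" using j by auto
  have "apow mu a e = (\<Prod>l\<in>{1..<j}. a l powi e l) * (\<Prod>l\<in>{j} \<union> {j+1..mu}. a l powi e l)"
    unfolding apow_def U by (rule prod.union_disjoint) auto
  also have "\<dots> = (\<Prod>l\<in>{1..<j}. a l powi e l) * (a j powi e j * (\<Prod>l\<in>{j+1..mu}. a l powi e l))"
    by (subst prod.union_disjoint) auto
  also have "\<dots> \<le> 1 * (a j * (\<Prod>l\<in>{j+1..mu}. a l powi e l))"
  proof (rule mult_mono)
    show "(\<Prod>l\<in>{1..<j}. a l powi e l) \<le> 1"
    proof (rule prod_le_1)
      fix l assume "l \<in> {1..<j}"
      then have "0 < a l" "a l \<le> 1" "0 \<le> e l" using a below j by auto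
      then show "0 \<le> a l powi e l \<and> a l powi e l \<le> 1" by (simp add: power_int_le_one)
    qed
    have "a j powi e j \<le> a j powi 1" using a j by (intro power_int_decreasing) (auto simp: less_imp_le)
    moreover have "0 \<le> (\<Prod>l\<in>{j+1..mu}. a l powi e l)"
      using a by (intro prod_nonneg) (auto simp: less_imp_le)
    ultimately show "a j powi e j * (\<Prod>l\<in>{j+1..mu}. a l powi e l) \<le> a j * (\<Prod>l\<in>{j+1..mu}. a l powi e l)"
      by (simp add: mult_right_mono)
    show "0 \<le> a j powi e j * (\<Prod>l\<in>{j+1..mu}. a l powi e l)"
      using a j by (intro mult_nonneg_nonneg prod_nonneg) (auto simp: less_imp_le)
  qed simp
  finally show ?thesis by simp
qed

definition coeff_bound :: "nat \<Rightarrow> summand list \<Rightarrow> nat \<Rightarrow> (nat \<Rightarrow> real) \<Rightarrow> real" where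
  "coeff_bound mu P j v = sum_list (map (\<lambda>(c, e, bs). \<bar>c\<bar> * (\<Prod>l\<in>{j+1..mu}. v l powi e l)) P)"

lemma coeff_bound_nonneg: "\<forall>l\<in>{j+1..mu}. 0 < v l \<Longrightarrow> 0 \<le> coeff_bound mu P j v"
  unfolding coeff_bound_def
  by (induction P) (auto intro!: add_nonneg_nonneg mult_nonneg_nonneg prod_nonneg simp: less_imp_le)

lemma coeff_bound_restr: "coeff_bound mu P j (restr j mu v) = coeff_bound mu P j v"
  unfolding coeff_bound_def restr_def by (intro arg_cong[where f=sum_list] map_cong) (auto intro!: prod.cong)

lemma continuous_on_coeff_bound:
  assumes "\<forall>v\<in>S. \<forall>l\<in>{j+1..mu}. v l \<noteq> 0"
  shows "continuous_on S (coeff_bound mu P j)"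
proof -
  have "continuous_on S (\<lambda>v. v l powi e l)" if "l \<in> {j+1..mu}" for l e
    by (rule continuous_on_power_int)
       (use assms that in \<open>auto intro: continuous_on_product_then_coordinatewise[OF continuous_on_id]\<close>)
  then have "continuous_on S (\<lambda>v. \<Prod>l\<in>{j+1..mu}. v l powi e l)" for e
    by (intro continuous_on_prod) auto
  then have "continuous_on S (\<lambda>v. (\<lambda>(c, e, bs). \<bar>c\<bar> * (\<Prod>l\<in>{j+1..mu}. v l powi e l)) T)" for T
    by (cases T) (simp add: continuous_on_mult_left)
  then show ?thesis
    unfolding coeff_bound_def by (induction P) (auto intro!: continuous_on_add)
qed

lemma abs_summand_val_le:
  assumes a: "\<forall>l\<in>{1..s+z}. 0 < a l \<and> a l \<le> 1" and T: "good_summand (s+z) (c, e, bs)"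
  shows "\<bar>summand_val s z a x w (c, e, bs)\<bar> \<le> (\<Sum>j=1..s+z. a j * (\<bar>c\<bar> * (\<Prod>l\<in>{j+1..s+z}. a l powi e l)))"
proof -
  obtain j where j: "1 \<le> j" "j \<le> s+z" "1 \<le> e j" "\<forall>l. 1 \<le> l \<and> l < j \<longrightarrow> 0 \<le> e l"
    using T unfolding good_summand.simps leading_exponent_def by blast
  have ap: "\<forall>l\<in>{1..s+z}. 0 < a l" using a by auto
  have "\<bar>summand_val s z a x w (c, e, bs)\<bar> = \<bar>c\<bar> * apow (s+z) a e * \<bar>prod_list (map (block_val s z x w) bs)\<bar>"
    using apow_pos[OF ap, of e] by (simp add: abs_mult)
  also have "\<dots> \<le> \<bar>c\<bar> * apow (s+z) a e"
    using T abs_prod_block_val_le_1 apow_pos[OF ap, of e] by (intro mult_left_le) auto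
  also have "\<dots> \<le> a j * (\<bar>c\<bar> * (\<Prod>l\<in>{j+1..s+z}. a l powi e l))"
    using apow_le_leading[OF a j] by (simp add: mult_left_mono mult.left_commute)
  also have "\<dots> \<le> (\<Sum>j=1..s+z. a j * (\<bar>c\<bar> * (\<Prod>l\<in>{j+1..s+z}. a l powi e l)))"
    using j a by (intro member_le_sum) (auto intro!: mult_nonneg_nonneg prod_nonneg simp: less_imp_le)
  finally show ?thesis .
qed

lemma abs_poly_val_le:
  assumes a: "\<forall>l\<in>{1..s+z}. 0 < a l \<and> a l \<le> 1"
  shows "\<forall>T\<in>set P. good_summand (s+z) T \<Longrightarrow>
    \<bar>poly_val s z a x w P\<bar> \<le> (\<Sum>j=1..s+z. a j * coeff_bound (s+z) P j a)"
proof (induction P)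
  case Nil
  then show ?case by (simp add: poly_val_def coeff_bound_def)
next
  case (Cons T P)
  obtain c e bs where T: "T = (c, e, bs)" by (cases T)
  have "\<bar>poly_val s z a x w (T # P)\<bar> \<le> \<bar>summand_val s z a x w T\<bar> + \<bar>poly_val s z a x w P\<bar>"
    by (simp add: poly_val_Cons abs_triangle_ineq)
  also have "\<dots> \<le> (\<Sum>j=1..s+z. a j * (\<bar>c\<bar> * (\<Prod>l\<in>{j+1..s+z}. a l powi e l)))
      + (\<Sum>j=1..s+z. a j * coeff_bound (s+z) P j a)"
    using abs_summand_val_le[OF a] Cons T by (intro add_mono) auto
  also have "\<dots> = (\<Sum>j=1..s+z. a j * coeff_bound (s+z) (T # P) j a)"
    by (simp add: T coeff_bound_def sum.distrib[symmetric] distrib_left)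
  finally show ?case .
qed

lemma kappa_deriv_poly_has_derivative:
  assumes "\<forall>i\<in>{1..s+z}. 0 < a i" "closed_loop_traj s z \<omega> a x w" "t \<ge> 0"
  shows "((\<lambda>t. poly_val s z a (x t) (w t) (kappa_deriv_poly s z \<omega> k)) has_real_derivative
      poly_val s z a (x t) (w t) (kappa_deriv_poly s z \<omega> (Suc k))) (at t within {0..})"
proof -
  have "\<forall>T\<in>set (kappa_deriv_poly s z \<omega> k). \<forall>b\<in>set (snd (snd T)). bounded_block (s+z) b"
    using kappa_deriv_poly_good by (metis good_summand.simps prod.collapse)
  from poly_val_has_derivative[OF assms this] show ?thesis
    by (simp add: kappa_deriv_poly_def)
qed

text \<open>\<open>deriv_gain s z \<omega> p i\<close> is the paper's \<open>c\<^sub>i\<close>; for \<open>i = \<mu>\<close> it does not depend on its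
  argument and gives \<open>c\<^sub>\<mu>\<close>.\<close>

definition deriv_gain :: "nat \<Rightarrow> nat \<Rightarrow> (nat \<Rightarrow> real) \<Rightarrow> nat \<Rightarrow> nat \<Rightarrow> (nat \<Rightarrow> real) \<Rightarrow> real" where
  "deriv_gain s z \<omega> p i v = 1 + (\<Sum>k\<le>p. coeff_bound (s+z) (kappa_deriv_poly s z \<omega> k) i v)"

lemma coeff_bound_le_deriv_gain:
  assumes "\<forall>l\<in>{i+1..s+z}. 0 < v l" "k \<le> p"
  shows "coeff_bound (s+z) (kappa_deriv_poly s z \<omega> k) i v \<le> deriv_gain s z \<omega> p i v"
proof -
  have "coeff_bound (s+z) (kappa_deriv_poly s z \<omega> k) i v
      \<le> (\<Sum>k\<le>p. coeff_bound (s+z) (kappa_deriv_poly s z \<omega> k) i v)"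
    using assms coeff_bound_nonneg by (intro member_le_sum) auto
  then show ?thesis unfolding deriv_gain_def by simp
qed

lemma deriv_gain_pos:
  assumes "\<forall>l\<in>{i+1..s+z}. 0 < v l"
  shows "0 < deriv_gain s z \<omega> p i v"
proof -
  have "0 \<le> (\<Sum>k\<le>p. coeff_bound (s+z) (kappa_deriv_poly s z \<omega> k) i v)"
    using coeff_bound_nonneg[OF assms] by (intro sum_nonneg)
  then show ?thesis by (simp add: deriv_gain_def)
qed

lemma continuous_on_deriv_gain: "continuous_on (posbox i (s+z)) (deriv_gain s z \<omega> p i)"
proof -
  have "v l \<noteq> 0" if "v \<in> posbox i (s+z)" "l \<in> {i+1..s+z}" for v l
  proof -
    have "i < l \<and> l \<le> s+z" using that(2) by auto
    then show ?thesis using that(1) unfolding posbox_def by fastforce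
  qed
  then show ?thesis
    unfolding deriv_gain_def[abs_def]
    by (intro continuous_on_add continuous_on_const continuous_on_sum continuous_on_coeff_bound) blast
qed

lemma abs_kappa_deriv_le:
  assumes mu: "s + z \<ge> 1" and a: "\<forall>i\<in>{1..s+z}. 0 < a i \<and> a i \<le> 1" and k: "k \<le> p"
  shows "\<bar>poly_val s z a x w (kappa_deriv_poly s z \<omega> k)\<bar>
    \<le> a (s+z) * deriv_gain s z \<omega> p (s+z) (\<lambda>_. 0)
       + (\<Sum>i=1..s+z-1. a i * deriv_gain s z \<omega> p i (restr i (s+z) a))"
proof -
  have "\<bar>poly_val s z a x w (kappa_deriv_poly s z \<omega> k)\<bar>
      \<le> (\<Sum>i=1..s+z. a i * coeff_bound (s+z) (kappa_deriv_poly s z \<omega> k) i a)"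
    using kappa_deriv_poly_good by (intro abs_poly_val_le[OF a]) blast
  also have "\<dots> \<le> (\<Sum>i=1..s+z. a i * deriv_gain s z \<omega> p i (restr i (s+z) a))"
  proof (rule sum_mono)
    fix i assume i: "i \<in> {1..s+z}"
    have "\<forall>l\<in>{i+1..s+z}. 0 < restr i (s+z) a l" using a by (auto simp: restr_def)
    from coeff_bound_le_deriv_gain[OF this k]
    have "coeff_bound (s+z) (kappa_deriv_poly s z \<omega> k) i a \<le> deriv_gain s z \<omega> p i (restr i (s+z) a)"
      by (simp add: coeff_bound_restr)
    then show "a i * coeff_bound (s+z) (kappa_deriv_poly s z \<omega> k) i a
        \<le> a i * deriv_gain s z \<omega> p i (restr i (s+z) a)"
      using a i by (intro mult_left_mono) (auto simp: less_imp_le)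
  qed
  also have "\<dots> = (\<Sum>i=1..s+z-1. a i * deriv_gain s z \<omega> p i (restr i (s+z) a))
      + a (s+z) * deriv_gain s z \<omega> p (s+z) (restr (s+z) (s+z) a)"
    using mu by (cases "s+z") (auto simp: sum.cl_ivl_Suc)
  also have "deriv_gain s z \<omega> p (s+z) (restr (s+z) (s+z) a) = deriv_gain s z \<omega> p (s+z) (\<lambda>_. 0)"
    by (simp add: deriv_gain_def coeff_bound_def)
  finally show ?thesis by simp
qed

theorem proposition2:
  fixes s z p :: nat and \<omega> :: "nat \<Rightarrow> real"
  assumes "s + z \<ge> 1"
    and "\<forall>i\<in>{1..s}. \<omega> i > 0"
  shows "\<exists>c_mu :: real. \<exists>c :: nat \<Rightarrow> (nat \<Rightarrow> real) \<Rightarrow> real.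
     c_mu > 0 \<and>
     (\<forall>i\<in>{1..s+z-1}. continuous_on (posbox i (s+z)) (c i) \<and>
                        (\<forall>v\<in>posbox i (s+z). c i v > 0)) \<and>
     (\<forall>a :: nat \<Rightarrow> real. (\<forall>i\<in>{1..s+z}. 0 < a i \<and> a i \<le> 1) \<longrightarrow>
       (\<forall>x w. closed_loop_traj s z \<omega> a x w \<longrightarrow>
          (\<exists>D :: nat \<Rightarrow> real \<Rightarrow> real.
             (\<forall>t\<ge>0. D 0 t = kappa s z a (x t) (w t)) \<and>
             (\<forall>k<p. \<forall>t\<ge>0. (D k has_real_derivative D (Suc k) t) (at t within {0..})) \<and>
             (\<forall>k\<le>p. \<forall>t\<ge>0. \<bar>D k t\<bar> \<le>
                 a (s+z) * c_mu + (\<Sum>i=1..s+z-1. a i * c i (restr i (s+z) a))))))"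
proof (intro exI[of _ "deriv_gain s z \<omega> p (s+z) (\<lambda>_. 0)"] exI[of _ "deriv_gain s z \<omega> p"]
    conjI ballI allI impI)
  show "0 < deriv_gain s z \<omega> p (s+z) (\<lambda>_. 0)" by (rule deriv_gain_pos) simp
next
  fix i v assume "v \<in> posbox i (s+z)"
  then show "0 < deriv_gain s z \<omega> p i v" unfolding posbox_def by (intro deriv_gain_pos) auto
next
  fix a :: "nat \<Rightarrow> real" and x w
  assume a: "\<forall>i\<in>{1..s+z}. 0 < a i \<and> a i \<le> 1" and traj: "closed_loop_traj s z \<omega> a x w"
  define D where "D k t = poly_val s z a (x t) (w t) (kappa_deriv_poly s z \<omega> k)" for k t
  have "D 0 t = kappa s z a (x t) (w t)" for t
    by (simp add: D_def kappa_deriv_poly_def kappa_eq_poly_val)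
  moreover have "(D k has_real_derivative D (Suc k) t) (at t within {0..})" if "t \<ge> 0" for k t
    unfolding D_def using a traj that by (intro kappa_deriv_poly_has_derivative) auto
  moreover have "\<bar>D k t\<bar> \<le> a (s+z) * deriv_gain s z \<omega> p (s+z) (\<lambda>_. 0)
      + (\<Sum>i=1..s+z-1. a i * deriv_gain s z \<omega> p i (restr i (s+z) a))" if "k \<le> p" for k t
    unfolding D_def by (rule abs_kappa_deriv_le[OF assms(1) a that])
  ultimately show "\<exists>D. (\<forall>t\<ge>0. D 0 t = kappa s z a (x t) (w t)) \<and>
      (\<forall>k<p. \<forall>t\<ge>0. (D k has_real_derivative D (Suc k) t) (at t within {0..})) \<and>
      (\<forall>k\<le>p. \<forall>t\<ge>0. \<bar>D k t\<bar> \<le> a (s+z) * deriv_gain s z \<omega> p (s+z) (\<lambda>_. 0)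
         + (\<Sum>i=1..s+z-1. a i * deriv_gain s z \<omega> p i (restr i (s+z) a)))"
    by blast
qed (rule continuous_on_deriv_gain)

end
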